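(* Let $n\geq 3$ and suppose the dihedral group $\mathrm{D}_{2n}$ of order $2n$ has the $m$-DCI property for some integer $m$ with $1\leq m\leq n-1$. Then $n$ is odd.
   Context: For a group $G$ and a subset $S\subseteq G$ with $1\notin S$, the Cayley digraph $\mathrm{Cay}(G,S)$ has vertex set $G$ and arc set $\{(g,sg)\mid g\in G,\ s\in S\}$. $\mathrm{Cay}(G,S)$ is a CI-digraph if for every $T\subseteq G$ with $1\notin T$ and $\mathrm{Cay}(G,T)\cong\mathrm{Cay}(G,S)$ there is $\alpha\in\mathrm{Aut}(G)$ with $S^\alpha=T$. For a positive integer $m$, $G$ has the $m$-DCI property if every Cayley digraph $\mathrm{Cay}(G,S)$ with $|S|=m$ is a CI-digraph. *)

theory Defs
  imports "HOL-Algebra.Algebra"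
begin

definition cay_arcs :: "('a, 'b) monoid_scheme \<Rightarrow> 'a set \<Rightarrow> ('a \<times> 'a) set" where
  "cay_arcs G S = {(g, s \<otimes>\<^bsub>G\<^esub> g) | g s. g \<in> carrier G \<and> s \<in> S}"

definition cay_isomorphic :: "('a, 'b) monoid_scheme \<Rightarrow> 'a set \<Rightarrow> 'a set \<Rightarrow> bool" where
  "cay_isomorphic G S T \<longleftrightarrow>
     (\<exists>f. bij_betw f (carrier G) (carrier G) \<and>
          (\<forall>g\<in>carrier G. \<forall>h\<in>carrier G.
              (g, h) \<in> cay_arcs G S \<longleftrightarrow> (f g, f h) \<in> cay_arcs G T))"

definition is_CI_digraph :: "('a, 'b) monoid_scheme \<Rightarrow> 'a set \<Rightarrow> bool" where
  "is_CI_digraph G S \<longleftrightarrow>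
     (\<forall>T. T \<subseteq> carrier G \<and> \<one>\<^bsub>G\<^esub> \<notin> T \<and> cay_isomorphic G S T
          \<longrightarrow> (\<exists>\<alpha> \<in> iso G G. \<alpha> ` S = T))"

definition has_m_DCI :: "('a, 'b) monoid_scheme \<Rightarrow> nat \<Rightarrow> bool" where
  "has_m_DCI G m \<longleftrightarrow>
     (\<forall>S. S \<subseteq> carrier G \<and> \<one>\<^bsub>G\<^esub> \<notin> S \<and> card S = m \<longrightarrow> is_CI_digraph G S)"

text \<open>Dihedral group D_{2n} of order 2n: element (i, b) stands for r^i s^b, with
  r of order n, s an involution, and s r = r^{-1} s.\<close>
definition dihedral_group :: "nat \<Rightarrow> (nat \<times> bool) monoid" where
  "dihedral_group n = \<lparr> carrier = {0..<n} \<times> UNIV,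
     Group.monoid.mult = (\<lambda>(i, a) (j, b). (if a then (i + n - j) mod n else (i + j) mod n, a \<noteq> b)),
     one = (0, False) \<rparr>"

end

theory Submission
  imports Defs
begin

(* Suppose n is even, and write r = (1, False), s = (0, True) and z = r^(n/2) = (n div 2, False).
   For m = 1, Cay(D_2n, {s}) and Cay(D_2n, {z}) are both disjoint unions of n digons, hence
   isomorphic; but no automorphism maps the non-central s to the central z.
   For m >= 2, let S be a set of m reflections r^c s with c ranging over a set closed under
   negation mod n and containing -1. The bijection tau of D_2n that fixes r^i s^e for even i and
   swaps r^i and r^(-i) s for odd i is an isomorphism Cay(D_2n, S) ~ Cay(D_2n, tau S). Now tau S
   contains tau (r^(-1) s) = r, of order n > 2, whereas automorphisms map the involutions in S
   to involutions. *)

lemma cay_arcs_iff: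
  "g \<in> carrier G \<Longrightarrow> (g, h) \<in> cay_arcs G S \<longleftrightarrow> h \<in> (\<lambda>s. s \<otimes>\<^bsub>G\<^esub> g) ` S"
  by (auto simp: cay_arcs_def)

lemma cay_isomorphicI:
  assumes "monoid G" "S \<subseteq> carrier G" "bij_betw f (carrier G) (carrier G)"
    and nbhd: "\<And>g. g \<in> carrier G \<Longrightarrow>
      f ` (\<lambda>s. s \<otimes>\<^bsub>G\<^esub> g) ` S = (\<lambda>t. t \<otimes>\<^bsub>G\<^esub> f g) ` T"
  shows "cay_isomorphic G S T"
  unfolding cay_isomorphic_def
proof (intro exI conjI ballI)
  show "bij_betw f (carrier G) (carrier G)" by fact
  fix g h assume g: "g \<in> carrier G" and h: "h \<in> carrier G"
  have "(\<lambda>s. s \<otimes>\<^bsub>G\<^esub> g) ` S \<subseteq> carrier G"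
    using assms(1,2) g by (auto intro: monoid.m_closed)
  then have "h \<in> (\<lambda>s. s \<otimes>\<^bsub>G\<^esub> g) ` S \<longleftrightarrow> f h \<in> f ` (\<lambda>s. s \<otimes>\<^bsub>G\<^esub> g) ` S"
    using assms(3) h by (simp add: bij_betw_def inj_on_image_mem_iff[of f "carrier G"])
  moreover have "f g \<in> carrier G"
    using assms(3) g by (auto simp: bij_betw_def)
  ultimately show "(g, h) \<in> cay_arcs G S \<longleftrightarrow> (f g, f h) \<in> cay_arcs G T"
    using g by (simp add: cay_arcs_iff nbhd)
qed

lemma not_is_CI_digraphI:
  assumes "T \<subseteq> carrier G" "\<one>\<^bsub>G\<^esub> \<notin> T" "cay_isomorphic G S T"
    and "\<And>\<alpha>. \<alpha> \<in> iso G G \<Longrightarrow> \<alpha> ` S \<noteq> T"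
  shows "\<not> is_CI_digraph G S"
  using assms unfolding is_CI_digraph_def by blast

lemma (in group) cay_isomorphic_involutions:
  assumes a: "a \<in> carrier G" "a \<otimes> a = \<one>" and b: "b \<in> carrier G" "b \<otimes> b = \<one>"
    and A: "A \<subseteq> carrier G" "\<And>x. x \<in> carrier G \<Longrightarrow> x \<in> A \<longleftrightarrow> a \<otimes> x \<notin> A"
    and B: "B \<subseteq> carrier G" "\<And>y. y \<in> carrier G \<Longrightarrow> y \<in> B \<longleftrightarrow> b \<otimes> y \<notin> B"
    and \<rho>: "bij_betw \<rho> A B"
  shows "cay_isomorphic G {a} {b}"
proof -
  \<comment> \<open>f maps the coset {x, a \<otimes> x} of x \<in> A onto the coset {\<rho> x, b \<otimes> \<rho> x}\<close>
  define f where "f x = (if x \<in> A then \<rho> x else b \<otimes> \<rho> (a \<otimes> x))" for x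
  have aa: "a \<otimes> (a \<otimes> x) = x" if "x \<in> carrier G" for x
    using a that by (simp flip: m_assoc)
  have bb: "b \<otimes> (b \<otimes> y) = y" if "y \<in> carrier G" for y
    using b that by (simp flip: m_assoc)
  have \<rho>B: "\<rho> x \<in> B" "\<rho> x \<in> carrier G" if "x \<in> A" for x
    using \<rho> B(1) that by (auto simp: bij_betw_def)
  have shift: "f (a \<otimes> x) = b \<otimes> f x" if x: "x \<in> carrier G" for x
  proof (cases "x \<in> A")
    case True
    then show ?thesis using A x aa by (simp add: f_def)
  next
    case False
    then have "a \<otimes> x \<in> A" using A x by auto
    then show ?thesis using False \<rho>B by (simp add: f_def bb)
  qed
  have "bij_betw f A B"
    using \<rho> by (rule bij_betw_cong[THEN iffD1, rotated]) (simp add: f_def)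
  moreover have "bij_betw f (carrier G - A) (carrier G - B)"
  proof (rule bij_betw_imageI)
    have aA: "a \<otimes> x \<in> A" if "x \<in> carrier G - A" for x
      using A that by auto
    show "inj_on f (carrier G - A)"
    proof (rule inj_onI)
      fix x y assume x: "x \<in> carrier G - A" and y: "y \<in> carrier G - A" and "f x = f y"
      then have "\<rho> (a \<otimes> x) = \<rho> (a \<otimes> y)"
        using aA \<rho>B b by (simp add: f_def)
      then have "a \<otimes> x = a \<otimes> y"
        using aA[OF x] aA[OF y] \<rho> by (meson bij_betw_def inj_onD)
      then show "x = y" using x y a by simp
    qed
    show "f ` (carrier G - A) = carrier G - B"
    proof (intro equalityI subsetI)
      fix y assume "y \<in> f ` (carrier G - A)"
      then obtain x where x: "x \<in> carrier G - A" and "y = b \<otimes> \<rho> (a \<otimes> x)"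
        by (auto simp: f_def)
      moreover have "\<rho> (a \<otimes> x) \<in> B" "\<rho> (a \<otimes> x) \<in> carrier G"
        using \<rho>B aA[OF x] by auto
      ultimately show "y \<in> carrier G - B"
        using B(2)[of "\<rho> (a \<otimes> x)"] b by simp
    next
      fix y assume y: "y \<in> carrier G - B"
      then have "b \<otimes> y \<in> B" using B(2) by blast
      then obtain x where x: "x \<in> A" "\<rho> x = b \<otimes> y"
        using \<rho> by (auto simp: bij_betw_def)
      have "x \<in> carrier G" using x A(1) by blast
      then have ax: "a \<otimes> x \<in> carrier G - A"
        using A(2)[of x] x a by simp
      then have "f (a \<otimes> x) = y"
        using aa[of x] bb[of y] x y \<open>x \<in> carrier G\<close> by (simp add: f_def)
      then show "y \<in> f ` (carrier G - A)" using ax by (metis image_eqI)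
    qed
  qed
  ultimately have bij: "bij_betw f (carrier G) (carrier G)"
    using A(1) B(1) by (metis Diff_disjoint Diff_partition bij_betw_combine)
  show ?thesis
    by (rule cay_isomorphicI[OF monoid_axioms _ bij]) (use a shift in auto)
qed

lemma (in monoid) iso_reflects_commuting:
  assumes "\<alpha> \<in> iso G G" "x \<in> carrier G" "y \<in> carrier G" "\<alpha> x \<otimes> \<alpha> y = \<alpha> y \<otimes> \<alpha> x"
  shows "x \<otimes> y = y \<otimes> x"
proof -
  have "\<alpha> (x \<otimes> y) = \<alpha> (y \<otimes> x)"
    using assms Group.hom_mult[OF iso_imp_homomorphism[OF assms(1)]] by simp
  then show ?thesis
    using assms(1-3) by (meson iso_iff inj_onD m_closed)
qed

lemma (in group) iso_preserves_involution:
  assumes "\<alpha> \<in> iso G G" "x \<in> carrier G" "x \<otimes> x = \<one>"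
  shows "\<alpha> x \<otimes> \<alpha> x = \<one>"
  using assms by (metis hom_mult hom_one iso_imp_homomorphism group_axioms)

lemma dihedral_group_carrier [simp]: "carrier (dihedral_group n) = {0..<n} \<times> UNIV"
  and dihedral_group_one [simp]: "\<one>\<^bsub>dihedral_group n\<^esub> = (0, False)"
  and dihedral_group_mult [simp]: "(i, a) \<otimes>\<^bsub>dihedral_group n\<^esub> (j, b) =
    (if a then (i + n - j) mod n else (i + j) mod n, a \<noteq> b)"
  by (simp_all add: dihedral_group_def)

text \<open>Identities in dihedral_group are proved on integer representatives of the rotation index,
  where the group law involves no truncated subtraction.\<close>

definition residue :: "nat \<Rightarrow> int \<Rightarrow> nat" where
  "residue n U = nat (U mod int n)"

lemma int_residue: "n > 0 \<Longrightarrow> int (residue n U) = U mod int n"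
  by (simp add: residue_def)

lemma residue_less: "n > 0 \<Longrightarrow> residue n U < n"
  by (simp add: residue_def nat_less_iff)

lemma residue_of_nat: "c < n \<Longrightarrow> residue n (int c) = c"
  by (simp add: residue_def flip: zmod_int)

lemma residue_eq_iff: "n > 0 \<Longrightarrow> residue n U = residue n V \<longleftrightarrow> U mod int n = V mod int n"
  by (simp add: residue_def eq_nat_nat_iff)

lemma even_residue_iff: "even n \<Longrightarrow> n > 0 \<Longrightarrow> even (residue n U) \<longleftrightarrow> even U"
  by (metis even_of_nat int_residue of_nat_0_less_iff dvd_mod_iff)

lemma residue_add: "n > 0 \<Longrightarrow> (residue n U + residue n V) mod n = residue n (U + V)"
proof -
  assume n: "n > 0"
  have "int ((residue n U + residue n V) mod n) = (U mod n + V mod n) mod n"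
    by (simp add: zmod_int int_residue n)
  also have "\<dots> = (U + V) mod n"
    by (simp add: mod_add_eq)
  finally show ?thesis
    by (metis residue_def nat_int)
qed

lemma residue_diff: "n > 0 \<Longrightarrow> (residue n U + n - residue n V) mod n = residue n (U - V)"
proof -
  assume n: "n > 0"
  have "int ((residue n U + n - residue n V) mod n) = (U mod n + n - V mod n) mod n"
    using residue_less[OF n, of V] by (simp add: zmod_int int_residue n of_nat_diff)
  also have "\<dots> = ((U mod n - V mod n) + int n) mod int n"
    by (simp add: algebra_simps)
  also have "\<dots> = (U - V) mod n"
    by (simp add: mod_diff_eq)
  finally show ?thesis
    by (metis residue_def nat_int)
qed

lemma dihedral_group_mult_residue:
  "n > 0 \<Longrightarrow> (residue n U, a) \<otimes>\<^bsub>dihedral_group n\<^esub> (residue n V, b) =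
     (residue n (if a then U - V else U + V), a \<noteq> b)"
  by (simp add: residue_add residue_diff)

lemma dihedral_group_residue_cases:
  assumes "x \<in> carrier (dihedral_group n)"
  obtains U a where "x = (residue n U, a)"
proof -
  obtain i a where "x = (i, a)" "i < n"
    using assms by auto
  then show ?thesis
    using that[of "int i" a] by (simp add: residue_of_nat)
qed

lemma group_dihedral_group:
  assumes n: "n > 0"
  shows "group (dihedral_group n)"
proof (rule groupI)
  fix x y z assume "x \<in> carrier (dihedral_group n)" "y \<in> carrier (dihedral_group n)"
    "z \<in> carrier (dihedral_group n)"
  then show "x \<otimes>\<^bsub>dihedral_group n\<^esub> y \<otimes>\<^bsub>dihedral_group n\<^esub> z =
      x \<otimes>\<^bsub>dihedral_group n\<^esub> (y \<otimes>\<^bsub>dihedral_group n\<^esub> z)"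
    by (elim dihedral_group_residue_cases)
      (simp add: dihedral_group_mult_residue[OF n] residue_eq_iff[OF n] algebra_simps
        del: dihedral_group_mult)
next
  fix x assume "x \<in> carrier (dihedral_group n)"
  then obtain i a where x: "x = (i, a)" "i < n" by auto
  show "\<exists>y\<in>carrier (dihedral_group n). y \<otimes>\<^bsub>dihedral_group n\<^esub> x = \<one>\<^bsub>dihedral_group n\<^esub>"
    using x n by (intro bexI[of _ "if a then x else ((n - i) mod n, False)"])
      (auto simp: mod_add_left_eq)
qed (use n in auto)

lemma dihedral_centre_commute:
  assumes "even n" "y \<in> carrier (dihedral_group n)"
  shows "(n div 2, False) \<otimes>\<^bsub>dihedral_group n\<^esub> y = y \<otimes>\<^bsub>dihedral_group n\<^esub> (n div 2, False)"
  using assms by (cases y) (auto simp: add.commute elim!: evenE)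

lemma residue_uminus: "n > 0 \<Longrightarrow> (n - residue n U) mod n = residue n (- U)"
  using residue_diff[of n 0 U] by (simp add: residue_def)

text \<open>For even n this is the bijection tau of the proof: it fixes r^i s^e for even i and swaps r^i
  with r^(-i) s for odd i. It is not a homomorphism, but dihedral_twist_mult shows that it
  respects left multiplication up to conjugation by s.\<close>

definition dihedral_twist :: "nat \<Rightarrow> nat \<times> bool \<Rightarrow> nat \<times> bool" where
  "dihedral_twist n = (\<lambda>(i, a). if odd i then ((n - i) mod n, \<not> a) else (i, a))"

lemma dihedral_twist_residue:
  "even n \<Longrightarrow> n > 0 \<Longrightarrow>
    dihedral_twist n (residue n U, a) = (if odd U then (residue n (- U), \<not> a) else (residue n U, a))"
  by (simp add: dihedral_twist_def even_residue_iff residue_uminus)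

lemma dihedral_twist_mult:
  assumes n: "even n" "n > 0"
    and "x \<in> carrier (dihedral_group n)" "g \<in> carrier (dihedral_group n)"
  shows "dihedral_twist n (x \<otimes>\<^bsub>dihedral_group n\<^esub> g) =
    dihedral_twist n (if odd (fst g)
        then (0, True) \<otimes>\<^bsub>dihedral_group n\<^esub> x \<otimes>\<^bsub>dihedral_group n\<^esub> (0, True) else x)
      \<otimes>\<^bsub>dihedral_group n\<^esub> dihedral_twist n g"
proof -
  have s: "(0, True) = (residue n 0, True)"
    using residue_of_nat[of 0 n] n by simp
  obtain U a V b where "x = (residue n U, a)" "g = (residue n V, b)"
    using assms(3,4) by (elim dihedral_group_residue_cases)
  then show ?thesis
    unfolding s
    by (cases a; cases b; cases "even U"; cases "even V")
      (simp_all add: n dihedral_group_mult_residue dihedral_twist_residue even_residue_iff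
        residue_eq_iff algebra_simps del: dihedral_group_mult)
qed

lemma dihedral_twist_closed:
  "n > 0 \<Longrightarrow> x \<in> carrier (dihedral_group n) \<Longrightarrow> dihedral_twist n x \<in> carrier (dihedral_group n)"
  by (cases x) (auto simp: dihedral_twist_def)

lemma dihedral_twist_twist:
  "even n \<Longrightarrow> n > 0 \<Longrightarrow> x \<in> carrier (dihedral_group n) \<Longrightarrow>
    dihedral_twist n (dihedral_twist n x) = x"
  by (elim dihedral_group_residue_cases) (simp add: dihedral_twist_residue)

lemma bij_dihedral_twist:
  "even n \<Longrightarrow> n > 0 \<Longrightarrow>
    bij_betw (dihedral_twist n) (carrier (dihedral_group n)) (carrier (dihedral_group n))"
  using dihedral_twist_twist[of n] dihedral_twist_closed[of n]
  by (intro bij_betw_byWitness[where f' = "dihedral_twist n"])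
    (simp_all add: image_subset_iff del: dihedral_group_carrier)

lemma dihedral_reflection_conj:
  "i < n \<Longrightarrow>
    (0, True) \<otimes>\<^bsub>dihedral_group n\<^esub> (i, a) \<otimes>\<^bsub>dihedral_group n\<^esub> (0, True) = ((n - i) mod n, a)"
  by (auto simp: mod_add_left_eq)

lemma cay_isomorphic_dihedral_twist:
  assumes n: "even n" "n > 0" and S: "S \<subseteq> carrier (dihedral_group n)"
    and conj: "\<And>x. x \<in> S \<Longrightarrow>
      (0, True) \<otimes>\<^bsub>dihedral_group n\<^esub> x \<otimes>\<^bsub>dihedral_group n\<^esub> (0, True) \<in> S"
  shows "cay_isomorphic (dihedral_group n) S (dihedral_twist n ` S)"
proof (rule cay_isomorphicI)
  let ?D = "dihedral_group n" and ?\<tau> = "dihedral_twist n"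
  let ?c = "\<lambda>x. (0, True) \<otimes>\<^bsub>?D\<^esub> x \<otimes>\<^bsub>?D\<^esub> (0, True)"
  show "monoid ?D" using group_dihedral_group[OF n(2)] by (rule group.is_monoid)
  show "S \<subseteq> carrier ?D" by fact
  show "bij_betw ?\<tau> (carrier ?D) (carrier ?D)" using n by (rule bij_dihedral_twist)
  have cc: "?c (?c x) = x" if "x \<in> carrier ?D" for x
    using that by (cases "fst x = 0") (auto simp: dihedral_reflection_conj simp del: dihedral_group_mult)
  have cS: "?c ` S = S"
  proof
    show "?c ` S \<subseteq> S" using conj by blast
    show "S \<subseteq> ?c ` S"
    proof
      fix x assume x: "x \<in> S"
      then have "x = ?c (?c x)" using S by (intro cc[symmetric]) blast
      then show "x \<in> ?c ` S" using conj[OF x] by (rule image_eqI)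
    qed
  qed
  fix g assume g: "g \<in> carrier ?D"
  have "?\<tau> ` (\<lambda>x. x \<otimes>\<^bsub>?D\<^esub> g) ` S =
      (\<lambda>x. ?\<tau> (if odd (fst g) then ?c x else x) \<otimes>\<^bsub>?D\<^esub> ?\<tau> g) ` S"
    unfolding image_image using S by (intro image_cong refl dihedral_twist_mult[OF n _ g]) blast
  also have "\<dots> = (\<lambda>t. t \<otimes>\<^bsub>?D\<^esub> ?\<tau> g) ` ?\<tau> ` (if odd (fst g) then ?c ` S else S)"
    by (cases "odd (fst g)") (simp_all only: if_True if_False not_False_eq_True image_image)
  finally show "?\<tau> ` (\<lambda>x. x \<otimes>\<^bsub>?D\<^esub> g) ` S = (\<lambda>t. t \<otimes>\<^bsub>?D\<^esub> ?\<tau> g) ` ?\<tau> ` S"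
    by (simp only: cS if_cancel)
qed

lemma cay_isomorphic_dihedral_reflection_centre:
  assumes n: "even n" "n > 0"
  shows "cay_isomorphic (dihedral_group n) {(0, True)} {(n div 2, False)}"
proof -
  interpret group "dihedral_group n"
    using n(2) by (rule group_dihedral_group)
  obtain h where h: "n = 2 * h" "h > 0" using n by (auto elim: evenE)
  have "bij_betw (\<lambda>(i, _). (i mod h, h \<le> i)) ({0..<n} \<times> {False}) ({0..<h} \<times> UNIV)"
    by (rule bij_betw_byWitness[where f' = "\<lambda>(j, c). (if c then j + h else j, False)"])
      (use h in \<open>auto simp: le_mod_geq\<close>)
  moreover have "(h + j) mod n = (if j < h then h + j else j - h)" if "j < n" for j
    using h that by (auto simp: le_mod_geq)
  ultimately show ?thesis
    using h by (intro cay_isomorphic_involutions) (auto split: if_splits)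
qed

lemma not_is_CI_digraph_dihedral_reflection:
  assumes n: "even n" "3 \<le> n"
  shows "\<not> is_CI_digraph (dihedral_group n) {(0, True)}"
proof (rule not_is_CI_digraphI)
  let ?D = "dihedral_group n"
  interpret group ?D
    using n by (intro group_dihedral_group) simp
  show "{(n div 2, False)} \<subseteq> carrier ?D" "\<one>\<^bsub>?D\<^esub> \<notin> {(n div 2, False)}"
    using n by auto
  show "cay_isomorphic ?D {(0, True)} {(n div 2, False)}"
    using n by (intro cay_isomorphic_dihedral_reflection_centre) auto
  fix \<alpha> assume \<alpha>: "\<alpha> \<in> iso ?D ?D"
  show "\<alpha> ` {(0, True)} \<noteq> {(n div 2, False)}"
  proof
    assume "\<alpha> ` {(0, True)} = {(n div 2, False)}"
    moreover have "\<alpha> (1, False) \<in> carrier ?D"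
      using n by (intro hom_in_carrier[OF iso_imp_homomorphism[OF \<alpha>]]) auto
    ultimately have "\<alpha> (0, True) \<otimes>\<^bsub>?D\<^esub> \<alpha> (1, False) = \<alpha> (1, False) \<otimes>\<^bsub>?D\<^esub> \<alpha> (0, True)"
      using dihedral_centre_commute[OF n(1)] by simp
    then have "(0, True) \<otimes>\<^bsub>?D\<^esub> (1, False) = (1, False) \<otimes>\<^bsub>?D\<^esub> (0, True)"
      by (rule iso_reflects_commuting[OF \<alpha>, rotated 2]) (use n in auto)
    then show False
      using n by simp
  qed
qed

lemma not_is_CI_digraph_dihedral_reflections:
  assumes n: "even n" "3 \<le> n"
    and B: "B \<subseteq> {0..<n}" "n - 1 \<in> B" "\<And>c. c \<in> B \<Longrightarrow> (n - c) mod n \<in> B"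
  shows "\<not> is_CI_digraph (dihedral_group n) (B \<times> {True})"
proof (rule not_is_CI_digraphI)
  let ?D = "dihedral_group n" and ?\<tau> = "dihedral_twist n"
  interpret group ?D
    using n by (intro group_dihedral_group) simp
  have S: "B \<times> {True} \<subseteq> carrier ?D"
    using B by auto
  show "?\<tau> ` (B \<times> {True}) \<subseteq> carrier ?D"
    using S n dihedral_twist_closed[of n] by (auto simp del: dihedral_group_carrier)
  show "\<one>\<^bsub>?D\<^esub> \<notin> ?\<tau> ` (B \<times> {True})"
  proof
    assume "\<one>\<^bsub>?D\<^esub> \<in> ?\<tau> ` (B \<times> {True})"
    then obtain c where "c \<in> B" "?\<tau> (c, True) = (0, False)"
      by auto
    moreover have "c < n"
      using B(1) \<open>c \<in> B\<close> by auto
    then have "(n - c) mod n = n - c \<and> n - c \<noteq> 0" if "odd c"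
      using that by (cases c) auto
    ultimately show False
      by (auto simp: dihedral_twist_def split: if_splits)
  qed
  show "cay_isomorphic ?D (B \<times> {True}) (?\<tau> ` (B \<times> {True}))"
  proof (rule cay_isomorphic_dihedral_twist)
    fix x assume "x \<in> B \<times> {True}"
    then obtain c where "x = (c, True)" "c \<in> B" by blast
    then show "(0, True) \<otimes>\<^bsub>?D\<^esub> x \<otimes>\<^bsub>?D\<^esub> (0, True) \<in> B \<times> {True}"
      using B(3)[of c] by simp
  qed (use n S in auto)
  fix \<alpha> assume \<alpha>: "\<alpha> \<in> iso ?D ?D"
  have "?\<tau> (n - 1, True) = (1, False)"
    using n by (auto simp: dihedral_twist_def)
  then have r: "(1, False) \<in> ?\<tau> ` (B \<times> {True})"
    using B(2) by (metis SigmaI image_eqI singletonI)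
  show "\<alpha> ` (B \<times> {True}) \<noteq> ?\<tau> ` (B \<times> {True})"
  proof
    assume "\<alpha> ` (B \<times> {True}) = ?\<tau> ` (B \<times> {True})"
    then have "(1, False) \<in> \<alpha> ` (B \<times> {True})"
      using r by simp
    then obtain x where x: "x \<in> B \<times> {True}" "\<alpha> x = (1, False)"
      by (rule imageE) simp
    have "x \<otimes>\<^bsub>?D\<^esub> x = \<one>\<^bsub>?D\<^esub>"
      using x(1) B(1) by auto
    then have "\<alpha> x \<otimes>\<^bsub>?D\<^esub> \<alpha> x = \<one>\<^bsub>?D\<^esub>"
      using x(1) S by (intro iso_preserves_involution[OF \<alpha>]) auto
    then show False
      using n by (simp add: x(2))
  qed
qed

lemma obtain_symmetric_residue_set:
  fixes m n :: nat
  assumes "2 \<le> m" "m < n"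
  obtains B where "B \<subseteq> {0..<n}" "card B = m" "n - 1 \<in> B"
    "\<And>c. c \<in> B \<Longrightarrow> (n - c) mod n \<in> B"
proof -
  define p where "p = m div 2"
  define B where "B = (if odd m then {0..p} else {1..p}) \<union> {n - p..<n}"
  have p: "1 \<le> p" "2 * p < n"
    using assms by (auto simp: p_def)
  have "card B = card (if odd m then {0..p} else {1..p}) + card {n - p..<n}"
    unfolding B_def using p by (intro card_Un_disjoint) auto
  also have "\<dots> = m"
    using p unfolding p_def by simp presburger
  finally have "card B = m" .
  moreover have "(n - c) mod n \<in> B" if "c \<in> B" for c
  proof (cases "c = 0")
    case False
    then have "(n - c) mod n = n - c"
      using that p by (auto simp: B_def)
    then show ?thesis
      using that False p by (auto simp: B_def split: if_splits)
  qed (use that in simp)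
  moreover have "B \<subseteq> {0..<n}" "n - 1 \<in> B"
    using p by (auto simp: B_def)
  ultimately show ?thesis
    using that by blast
qed

theorem lemma3p3:
  fixes n m :: nat
  assumes "n \<ge> 3" and "1 \<le> m" and "m \<le> n - 1"
    and "has_m_DCI (dihedral_group n) m"
  shows "odd n"
proof (rule ccontr)
  assume "\<not> odd n"
  then have n: "even n" "3 \<le> n"
    using assms(1) by simp_all
  let ?D = "dihedral_group n"
  have "\<exists>S \<subseteq> carrier ?D. \<one>\<^bsub>?D\<^esub> \<notin> S \<and> card S = m \<and> \<not> is_CI_digraph ?D S"
  proof (cases "m = 1")
    case True
    then show ?thesis
      using not_is_CI_digraph_dihedral_reflection[OF n] n
      by (intro exI[of _ "{(0, True)}"]) auto
  next
    case False
    then have "2 \<le> m" "m < n"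
      using assms(1-3) by auto
    then obtain B where B: "B \<subseteq> {0..<n}" "card B = m" "n - 1 \<in> B"
      "\<And>c. c \<in> B \<Longrightarrow> (n - c) mod n \<in> B"
      by (rule obtain_symmetric_residue_set) blast
    then show ?thesis
      using not_is_CI_digraph_dihedral_reflections[OF n B(1,3,4)]
      by (intro exI[of _ "B \<times> {True}"]) (auto simp: card_cartesian_product)
  qed
  then show False
    using assms(4) by (auto simp: has_m_DCI_def)
qed

end
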